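(* Let $q$ be a power of a prime $p$ and let $L\subseteq[q-1]$. Let $\mathcal{F}\subseteq 2^{[n]}$ be $q$-modular $L$-differencing Sperner. Suppose $g\in\mathbb{Z}[y]$ is a polynomial of degree $d$ such that $v_p(g(0))<v_p(g(u))$ for every $u\in L+q\mathbb{Z}$. Then $$|\mathcal{F}|\le\sum_{i=0}^{d}\binom{n}{i}.$$ If in addition either $v_p(g(0))\le v_p(g(u-1))$ for every $u\in L+q\mathbb{Z}$, or $v_p(g(0))\le v_p(g(u+1))$ for every $u\in L+q\mathbb{Z}$, then $$|\mathcal{F}|\le\sum_{i=0}^{d}\binom{n-1}{i}.$$
   Context: $[n]=\{1,\ldots,n\}$, $2^{[n]}$ is the family of all subsets of $[n]$, $L+q\mathbb{Z}=\{\ell+qt:\ell\in L,t\in\mathbb{Z}\}$. For a prime $p$ and integer $m$, $v_p(m)$ is the largest $k\ge0$ with $p^k\mid m$, and $v_p(0)=+\infty$. For $L\subseteq[q-1]$, $\mathcal{F}$ is $q$-modular $L$-differencing Sperner if for all distinct $A,B\in\mathcal{F}$, $|A\setminus B|\equiv\ell\pmod q$ for some $\ell\in L$. *)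

theory Defs
  imports "HOL-Computational_Algebra.Computational_Algebra" "HOL-Library.Extended_Nat"
begin

definition vp :: "nat \<Rightarrow> int \<Rightarrow> enat" where
  "vp p m = (if m = 0 then \<infinity> else enat (multiplicity (int p) m))"

definition mod_L_diff_sperner :: "nat \<Rightarrow> nat set \<Rightarrow> nat set set \<Rightarrow> bool" where
  "mod_L_diff_sperner q L F \<longleftrightarrow>
     (\<forall>A\<in>F. \<forall>B\<in>F. A \<noteq> B \<longrightarrow> (\<exists>l\<in>L. card (A - B) mod q = l mod q))"

definition shift_set :: "nat set \<Rightarrow> nat \<Rightarrow> int set" where
  "shift_set L q = {int l + int q * t | l t. l \<in> L}"

end

theory Submission imports Defs "HOL-Library.Function_Algebras" begin

text \<open>
  To each A \<in> F attach the rational function f_A on subsets Y of [n-1] that sends Y to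
  g(|Y - A|) if n \<in> A and to g(|A - Y|) otherwise; at Y = B - {n} it takes the value g(|B - A|),
  resp. g(|A - B|).  So the matrix (f_A(B - {n})) has the diagonal g(0), while by the Sperner
  condition every off-diagonal entry is divisible by p^(\<nu>+1), where p^\<nu> exactly divides g(0).
  Such a matrix is nonsingular (look at the entry of a vanishing combination whose coefficient has
  the least p-adic valuation), so the f_A are linearly independent.  Each f_A is a polynomial of
  degree at most deg g in the indicator variables of [n-1], i.e. lies in the span of the
  multilinear monomials of degree at most deg g, whose number is \<Sum>_{i\<le>d} (n-1 choose i).
  In particular the (n-1)-bound holds even without the extra hypothesis of the second claim.
\<close>

global_interpretation fun_space: vector_space "\<lambda>(c::rat) (f::'a \<Rightarrow> rat) x. c * f x"
  by unfold_locales (auto simp: fun_eq_iff algebra_simps)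

lemma sum_fun_apply: "(\<Sum>a\<in>A. f a) x = (\<Sum>a\<in>A. f a x)"
  by (induct A rule: infinite_finite_induct) auto

lemma rat_common_denominator:
  fixes r :: "'a \<Rightarrow> rat"
  assumes "finite A"
  shows "\<exists>(d::int) (c::'a \<Rightarrow> int). d > 0 \<and> (\<forall>x\<in>A. r x * of_int d = of_int (c x))"
proof -
  define den where "den x = snd (quotient_of (r x))" for x
  define d where "d = (\<Prod>x\<in>A. den x)"
  define c where "c x = fst (quotient_of (r x)) * (\<Prod>y\<in>A - {x}. den y)" for x
  have "r x * of_int d = of_int (c x)" if "x \<in> A" for x
  proof -
    have "r x = of_int (fst (quotient_of (r x))) / of_int (den x)"
      unfolding den_def by (metis prod.collapse quotient_of_div)
    moreover have "d = den x * (\<Prod>y\<in>A - {x}. den y)"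
      unfolding d_def using assms that by (simp add: prod.remove)
    moreover have "den x \<noteq> 0" unfolding den_def using quotient_of_denom_pos' by (metis less_irrefl)
    ultimately show ?thesis unfolding c_def by (simp add: field_simps)
  qed
  moreover have "d > 0" unfolding d_def den_def by (simp add: prod_pos quotient_of_denom_pos')
  ultimately show ?thesis by blast
qed

lemma prime_power_dvd_imp_le_multiplicity:
  fixes P x :: "'a :: factorial_semiring"
  assumes "prime P" "x \<noteq> 0" "P ^ k dvd x"
  shows "k \<le> multiplicity P x"
  using assms power_dvd_iff_le_multiplicity not_prime_unit by blast

lemma int_left_kernel_trivial_if_valuation_dominant:
  fixes P :: int and e :: "'b \<Rightarrow> 'b \<Rightarrow> int" and c :: "'b \<Rightarrow> int"
  assumes prime: "prime P" and fin: "finite F"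
    and diag: "\<And>A. A \<in> F \<Longrightarrow> e A A \<noteq> 0 \<and> multiplicity P (e A A) = \<nu>"
    and off: "\<And>A B. A \<in> F \<Longrightarrow> B \<in> F \<Longrightarrow> A \<noteq> B \<Longrightarrow> P ^ Suc \<nu> dvd e A B"
    and comb: "\<And>B. B \<in> F \<Longrightarrow> (\<Sum>A\<in>F. c A * e A B) = 0"
    and A: "A \<in> F"
  shows "c A = 0"
proof (rule ccontr)
  assume "c A \<noteq> 0"
  then obtain A0 where A0: "A0 \<in> F" "c A0 \<noteq> 0"
    and least: "\<And>A. A \<in> F \<Longrightarrow> c A \<noteq> 0 \<Longrightarrow> multiplicity P (c A0) \<le> multiplicity P (c A)"
    using ex_has_least_nat[of "\<lambda>A. A \<in> F \<and> c A \<noteq> 0" A "\<lambda>A. multiplicity P (c A)"] A by blast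
  define m where "m = multiplicity P (c A0)"
  have "P ^ (m + Suc \<nu>) dvd (\<Sum>A\<in>F - {A0}. c A * e A A0)"
  proof (rule dvd_sum)
    fix A assume A: "A \<in> F - {A0}"
    have "P ^ m dvd c A"
    proof (cases "c A = 0")
      case False
      with A least have "m \<le> multiplicity P (c A)" unfolding m_def by blast
      then show ?thesis by (rule multiplicity_dvd')
    qed simp
    moreover have "P ^ Suc \<nu> dvd e A A0" using A A0(1) off by blast
    ultimately show "P ^ (m + Suc \<nu>) dvd c A * e A A0"
      unfolding power_add by (rule mult_dvd_mono)
  qed
  moreover have "c A0 * e A0 A0 + (\<Sum>A\<in>F - {A0}. c A * e A A0) = 0"
    using comb[OF A0(1)] fin A0(1) by (simp add: sum.remove)
  ultimately have "P ^ (m + Suc \<nu>) dvd c A0 * e A0 A0"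
    by (metis add.commute dvd_add_right_iff dvd_0_right)
  moreover have "c A0 * e A0 A0 \<noteq> 0" using diag[OF A0(1)] A0(2) by simp
  ultimately have "m + Suc \<nu> \<le> multiplicity P (c A0 * e A0 A0)"
    by (intro prime_power_dvd_imp_le_multiplicity[OF prime])
  also have "\<dots> = m + \<nu>"
    using diag[OF A0(1)] A0(2) prime
    by (simp add: m_def prime_elem_multiplicity_mult_distrib[OF prime_imp_prime_elem])
  finally show False by simp
qed

lemma independent_if_valuation_dominant:
  fixes P :: int and f :: "'b \<Rightarrow> 'a \<Rightarrow> rat" and x :: "'b \<Rightarrow> 'a" and e :: "'b \<Rightarrow> 'b \<Rightarrow> int"
  assumes prime: "prime P" and fin: "finite F"
    and eval: "\<And>A B. A \<in> F \<Longrightarrow> B \<in> F \<Longrightarrow> f A (x B) = of_int (e A B)"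
    and diag: "\<And>A. A \<in> F \<Longrightarrow> e A A \<noteq> 0 \<and> multiplicity P (e A A) = \<nu>"
    and off: "\<And>A B. A \<in> F \<Longrightarrow> B \<in> F \<Longrightarrow> A \<noteq> B \<Longrightarrow> P ^ Suc \<nu> dvd e A B"
  shows "inj_on f F" and "fun_space.independent (f ` F)"
proof -
  show inj: "inj_on f F"
  proof (rule inj_onI, rule ccontr)
    fix A B assume A: "A \<in> F" and B: "B \<in> F" and "f A = f B" and "A \<noteq> B"
    then have "e A A = e B A" using eval by (metis of_int_eq_iff)
    then have "Suc \<nu> \<le> \<nu>"
      using off[OF B A] \<open>A \<noteq> B\<close> diag[OF A] prime_power_dvd_imp_le_multiplicity[OF prime] by metis
    then show False by simp
  qed
  show "fun_space.independent (f ` F)"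
  proof (rule fun_space.independent_if_scalars_zero[OF finite_imageI[OF fin]])
    fix r w
    assume sum: "(\<Sum>v\<in>f ` F. (\<lambda>y. r v * v y)) = 0" and "w \<in> f ` F"
    then obtain A where A: "A \<in> F" "w = f A" by blast
    obtain d c where d: "d > 0" and c: "\<And>A. A \<in> F \<Longrightarrow> r (f A) * of_int d = of_int (c A)"
      using rat_common_denominator[OF fin, of "r \<circ> f"] by auto
    have "c A = 0"
    proof (rule int_left_kernel_trivial_if_valuation_dominant[OF prime fin diag off _ A(1)])
      fix B assume B: "B \<in> F"
      have sum0: "(\<Sum>A\<in>F. r (f A) * of_int (e A B)) = 0"
        using fun_cong[OF sum, of "x B"] inj eval[OF _ B] by (simp add: sum_fun_apply sum.reindex)
      have "of_int (\<Sum>A\<in>F. c A * e A B) = (\<Sum>A\<in>F. (r (f A) * of_int d) * of_int (e A B))"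
        unfolding of_int_sum of_int_mult by (rule sum.cong) (simp_all add: c)
      also have "\<dots> = of_int d * (\<Sum>A\<in>F. r (f A) * of_int (e A B))"
        by (simp add: sum_distrib_left mult_ac)
      also have "\<dots> = 0" using sum0 by simp
      finally show "(\<Sum>A\<in>F. c A * e A B) = 0" by (simp only: of_int_eq_0_iff)
    qed
    then show "r w = 0" using c[OF A(1)] d A(2) by simp
  qed
qed

text \<open>The multilinear monomial \<Prod>i\<in>S. y_i evaluated at the indicator vector of Y.\<close>

definition subset_monomial :: "nat set \<Rightarrow> nat set \<Rightarrow> rat" where
  "subset_monomial S Y = (if S \<subseteq> Y then 1 else 0)"

definition multilinear_monomials :: "nat set \<Rightarrow> nat \<Rightarrow> (nat set \<Rightarrow> rat) set" where
  "multilinear_monomials N k = subset_monomial ` {S. S \<subseteq> N \<and> card S \<le> k}"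

lemma multilinear_monomials_mono:
  "j \<le> k \<Longrightarrow> fun_space.span (multilinear_monomials N j) \<subseteq> fun_space.span (multilinear_monomials N k)"
  by (rule fun_space.span_mono) (auto simp: multilinear_monomials_def)

lemma card_multilinear_monomials:
  assumes "finite N"
  shows "card (multilinear_monomials N k) \<le> (\<Sum>i=0..k. card N choose i)"
proof -
  have "card (multilinear_monomials N k) \<le> card {S. S \<subseteq> N \<and> card S \<le> k}"
    unfolding multilinear_monomials_def using assms by (intro card_image_le) simp
  also have "\<dots> = card (\<Union>i\<in>{0..k}. {S. S \<subseteq> N \<and> card S = i})"
    by (rule arg_cong[where f = card]) auto
  also have "\<dots> = (\<Sum>i=0..k. card {S. S \<subseteq> N \<and> card S = i})"
    using assms by (intro card_UN_disjoint) (auto intro: finite_subset[of _ "Pow N"])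
  also have "\<dots> = (\<Sum>i=0..k. card N choose i)"
    using n_subsets[OF assms] by simp
  finally show ?thesis .
qed

lemma card_Int_times_in_span:
  assumes "finite N" and "T \<subseteq> N" and "h \<in> fun_space.span (multilinear_monomials N k)"
  shows "(\<lambda>Y. of_nat (card (Y \<inter> T)) * h Y) \<in> fun_space.span (multilinear_monomials N (Suc k))"
  using assms(3)
proof (induction rule: fun_space.span_induct_alt)
  case base
  show ?case using fun_space.span_zero by (simp add: zero_fun_def)
next
  case (step c x y)
  then obtain S where S: "S \<subseteq> N" "card S \<le> k" and x: "x = subset_monomial S"
    by (auto simp: multilinear_monomials_def)
  have "finite T" using assms(1,2) finite_subset by blast
  have "(\<lambda>Y. of_nat (card (Y \<inter> T)) * x Y) = (\<Sum>i\<in>T. subset_monomial (insert i S))"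
  proof
    fix Y
    have "of_nat (card (Y \<inter> T)) = (\<Sum>i\<in>T. (if i \<in> Y then 1 else 0 :: rat))"
      using \<open>finite T\<close> by (simp add: sum.If_cases Int_commute)
    then show "of_nat (card (Y \<inter> T)) * x Y = (\<Sum>i\<in>T. subset_monomial (insert i S)) Y"
      by (simp add: x subset_monomial_def sum_distrib_right sum_fun_apply)
  qed
  moreover have "(\<Sum>i\<in>T. subset_monomial (insert i S)) \<in> fun_space.span (multilinear_monomials N (Suc k))"
  proof (rule fun_space.span_sum, rule fun_space.span_base)
    fix i assume "i \<in> T"
    moreover have "finite S" using S assms(1) finite_subset by blast
    ultimately show "subset_monomial (insert i S) \<in> multilinear_monomials N (Suc k)"
      using S assms(2) by (auto simp: multilinear_monomials_def card_insert_if)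
  qed
  ultimately have "(\<lambda>Y. of_nat (card (Y \<inter> T)) * x Y) \<in> fun_space.span (multilinear_monomials N (Suc k))"
    by simp
  then have "(\<lambda>Y. c * (of_nat (card (Y \<inter> T)) * x Y)) + (\<lambda>Y. of_nat (card (Y \<inter> T)) * y Y)
      \<in> fun_space.span (multilinear_monomials N (Suc k))"
    using step.IH by (intro fun_space.span_add fun_space.span_scale)
  also have "(\<lambda>Y. c * (of_nat (card (Y \<inter> T)) * x Y)) + (\<lambda>Y. of_nat (card (Y \<inter> T)) * y Y)
      = (\<lambda>Y. of_nat (card (Y \<inter> T)) * ((\<lambda>Y. c * x Y) + y) Y)"
    by (simp add: fun_eq_iff algebra_simps)
  finally show ?case .
qed

lemma poly_card_Int_in_span:
  assumes "finite N" and "T \<subseteq> N" and "degree h \<le> k"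
  shows "(\<lambda>Y. of_int (poly h (int (card (Y \<inter> T)))) :: rat) \<in> fun_space.span (multilinear_monomials N k)"
proof -
  have power_in_span: "(\<lambda>Y. of_nat (card (Y \<inter> T)) ^ j) \<in> fun_space.span (multilinear_monomials N j)" for j
  proof (induction j)
    case 0
    have "(\<lambda>Y. (of_nat (card (Y \<inter> T)) :: rat) ^ 0) = subset_monomial {}"
      by (simp add: subset_monomial_def fun_eq_iff)
    then show ?case by (auto simp: multilinear_monomials_def intro!: fun_space.span_base)
  next
    case (Suc j)
    from card_Int_times_in_span[OF assms(1,2) Suc] show ?case by simp
  qed
  have "(\<lambda>Y. of_int (poly h (int (card (Y \<inter> T)))) :: rat) =
      (\<Sum>i\<le>degree h. (\<lambda>Y. of_int (coeff h i) * of_nat (card (Y \<inter> T)) ^ i))"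
    by (simp add: fun_eq_iff sum_fun_apply poly_altdef)
  also have "\<dots> \<in> fun_space.span (multilinear_monomials N k)"
  proof (intro fun_space.span_sum fun_space.span_scale)
    fix i assume "i \<in> {..degree h}"
    with assms(3) have "i \<le> k" by simp
    then show "(\<lambda>Y. of_nat (card (Y \<inter> T)) ^ i) \<in> fun_space.span (multilinear_monomials N k)"
      using power_in_span multilinear_monomials_mono by blast
  qed
  finally show ?thesis .
qed

lemma atLeastAtMost_remove_top: "{1..n} - {n} = {1..n - 1 :: nat}"
  by auto

text \<open>
  For n \<notin> A the polynomial g(|A| - y) is evaluated at y = |Y \<inter> A|, so g is evaluated at |A - Y|.
  The indicator variable of n never occurs, which is what brings n down to n - 1.
\<close>

definition sperner_fun :: "nat \<Rightarrow> int poly \<Rightarrow> nat set \<Rightarrow> nat set \<Rightarrow> rat" where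
  "sperner_fun n g A = (\<lambda>Y. of_int (if n \<in> A then poly g (int (card (Y \<inter> ({1..n-1} - A))))
     else poly (pcompose g [:int (card A), -1:]) (int (card (Y \<inter> A)))))"

lemma sperner_fun_at_diff:
  assumes "A \<subseteq> {1..n}" and "B \<subseteq> {1..n}"
  shows "sperner_fun n g A (B - {n}) = of_int (poly g (int (card (if n \<in> A then B - A else A - B))))"
proof (cases "n \<in> A")
  case True
  with assms(2) atLeastAtMost_remove_top have "(B - {n}) \<inter> ({1..n-1} - A) = B - A" by blast
  then show ?thesis using True by (simp add: sperner_fun_def)
next
  case False
  have "finite A" using assms(1) finite_subset by blast
  moreover have "(B - {n}) \<inter> A = A \<inter> B" using False by auto
  ultimately have "int (card (A - B)) = int (card A) - int (card ((B - {n}) \<inter> A))"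
    by (simp add: card_Diff_subset_Int card_mono of_nat_diff)
  then show ?thesis using False by (simp add: sperner_fun_def poly_pcompose)
qed

lemma sperner_fun_in_span:
  assumes "A \<subseteq> {1..n}"
  shows "sperner_fun n g A \<in> fun_space.span (multilinear_monomials {1..n-1} (degree g))"
proof (cases "n \<in> A")
  case True
  then show ?thesis unfolding sperner_fun_def by (simp, intro poly_card_Int_in_span) auto
next
  case False
  with assms atLeastAtMost_remove_top have "A \<subseteq> {1..n-1}" by blast
  moreover have "degree (pcompose g [:int (card A), -1:]) = degree g" by (simp add: degree_pcompose)
  ultimately show ?thesis using False unfolding sperner_fun_def by (simp, intro poly_card_Int_in_span) auto
qed

lemma vp_less_imp_power_dvd:
  assumes "vp p a < vp p b"
  shows "a \<noteq> 0" and "int p ^ Suc (multiplicity (int p) a) dvd b"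
proof -
  show "a \<noteq> 0" using assms by (auto simp: vp_def)
  show "int p ^ Suc (multiplicity (int p) a) dvd b"
  proof (cases "b = 0")
    case False
    with assms \<open>a \<noteq> 0\<close> have "Suc (multiplicity (int p) a) \<le> multiplicity (int p) b"
      by (simp add: vp_def)
    then show ?thesis by (rule multiplicity_dvd')
  qed simp
qed

lemma card_le_sum_choose_if_valuation_gap:
  fixes p n :: nat and F :: "nat set set" and g :: "int poly"
  assumes "prime p" and F: "F \<subseteq> Pow {1..n}" and g0: "poly g 0 \<noteq> 0"
    and gap: "\<And>A B. A \<in> F \<Longrightarrow> B \<in> F \<Longrightarrow> A \<noteq> B \<Longrightarrow>
      int p ^ Suc (multiplicity (int p) (poly g 0)) dvd poly g (int (card (A - B)))"
  shows "card F \<le> (\<Sum>i=0..degree g. (n - 1) choose i)"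
proof -
  have fin: "finite F" using F finite_subset by blast
  let ?M = "multilinear_monomials {1..n-1} (degree g)"
  have "prime (int p)" using assms(1) by simp
  moreover have "sperner_fun n g A (B - {n}) = of_int (poly g (int (card (if n \<in> A then B - A else A - B))))"
    if "A \<in> F" "B \<in> F" for A B
    using sperner_fun_at_diff F that by blast
  moreover have "int p ^ Suc (multiplicity (int p) (poly g 0))
      dvd poly g (int (card (if n \<in> A then B - A else A - B)))"
    if "A \<in> F" "B \<in> F" "A \<noteq> B" for A B
    using gap[of A B] gap[of B A] that by (cases "n \<in> A") auto
  ultimately have "inj_on (sperner_fun n g) F" and "fun_space.independent (sperner_fun n g ` F)"
    using independent_if_valuation_dominant[of "int p" F "sperner_fun n g" "\<lambda>B. B - {n}"
        "\<lambda>A B. poly g (int (card (if n \<in> A then B - A else A - B)))"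
        "multiplicity (int p) (poly g 0)"] fin g0 by auto
  moreover have "finite ?M" unfolding multilinear_monomials_def by simp
  moreover have "sperner_fun n g ` F \<subseteq> fun_space.span ?M" using sperner_fun_in_span F by blast
  ultimately have "card F \<le> card ?M" using fun_space.independent_span_bound by (metis card_image)
  also have "\<dots> \<le> (\<Sum>i=0..degree g. (n - 1) choose i)" using card_multilinear_monomials[of "{1..n-1}"] by simp
  finally show ?thesis .
qed

lemma card_le_sum_choose_if_vp_gap:
  fixes p n :: nat and F :: "nat set set" and g :: "int poly"
  assumes "prime p" and F: "F \<subseteq> Pow {1..n}"
    and gap: "\<And>A B. A \<in> F \<Longrightarrow> B \<in> F \<Longrightarrow> A \<noteq> B \<Longrightarrow>
      vp p (poly g 0) < vp p (poly g (int (card (A - B))))"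
  shows "card F \<le> (\<Sum>i=0..degree g. (n - 1) choose i)"
proof (cases "\<exists>A\<in>F. \<exists>B\<in>F. A \<noteq> B")
  case True
  then have "poly g 0 \<noteq> 0" using gap vp_less_imp_power_dvd(1) by blast
  moreover have "int p ^ Suc (multiplicity (int p) (poly g 0)) dvd poly g (int (card (A - B)))"
    if "A \<in> F" "B \<in> F" "A \<noteq> B" for A B
    using gap[OF that] by (rule vp_less_imp_power_dvd(2))
  ultimately show ?thesis using card_le_sum_choose_if_valuation_gap[OF assms(1) F] by blast
next
  case False
  have "finite F" using F finite_subset by blast
  with False have "card F \<le> 1" by (simp add: card_le_Suc0_iff_eq)
  also have "1 \<le> (\<Sum>i=0..degree g. (n - 1) choose i)"
    using sum.atLeast_Suc_atMost[of 0 "degree g" "\<lambda>i. (n - 1) choose i"] by simp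
  finally show ?thesis .
qed

lemma card_diff_in_shift_set:
  assumes "L \<subseteq> {1..q-1}" and "mod_L_diff_sperner q L F"
    and "A \<in> F" and "B \<in> F" and "A \<noteq> B"
  shows "int (card (A - B)) \<in> shift_set L q"
proof -
  obtain l where l: "l \<in> L" "card (A - B) mod q = l mod q"
    using assms(2-) unfolding mod_L_diff_sperner_def by blast
  have "l \<in> {1..q-1}" using l(1) assms(1) by blast
  then have "l < q" by auto
  then have "card (A - B) = l + q * (card (A - B) div q)"
    using l(2) div_mult_mod_eq[of "card (A - B)" q] by (simp add: mult.commute)
  then have "int (card (A - B)) = int l + int q * int (card (A - B) div q)"
    by (metis of_nat_add of_nat_mult)
  then show ?thesis unfolding shift_set_def using l(1) by blast
qed

theorem mainTheorem7:
  fixes p q n :: nat and L :: "nat set" and F :: "nat set set" and g :: "int poly"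
  assumes "prime p" and "\<exists>k\<ge>1. q = p ^ k"
    and "L \<subseteq> {1..q-1}"
    and "F \<subseteq> Pow {1..n}"
    and "mod_L_diff_sperner q L F"
    and "\<forall>u\<in>shift_set L q. vp p (poly g 0) < vp p (poly g u)"
  shows "card F \<le> (\<Sum>i=0..degree g. n choose i) \<and>
         (((\<forall>u\<in>shift_set L q. vp p (poly g 0) \<le> vp p (poly g (u - 1))) \<or>
         (\<forall>u\<in>shift_set L q. vp p (poly g 0) \<le> vp p (poly g (u + 1))))
         \<longrightarrow> card F \<le> (\<Sum>i=0..degree g. (n - 1) choose i))"
proof -
  have gap: "vp p (poly g 0) < vp p (poly g (int (card (A - B))))"
    if "A \<in> F" "B \<in> F" "A \<noteq> B" for A B
    using assms(6) card_diff_in_shift_set[OF assms(3,5) that] by blast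
  have "card F \<le> (\<Sum>i=0..degree g. (n - 1) choose i)"
    using card_le_sum_choose_if_vp_gap[OF assms(1,4) gap] .
  moreover have "(\<Sum>i=0..degree g. (n - 1) choose i) \<le> (\<Sum>i=0..degree g. n choose i)"
    by (intro sum_mono binomial_right_mono) simp
  ultimately show ?thesis by simp
qed

end
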